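(* Let $\mathcal M=(G,In,Out,Leak)$ be a linear compartmental model with $n$ compartments and compartmental matrix $A$, and let $q,r$ be compartments. Write $$\det\big((\lambda I-A)^{r,q}\big)=c_{n-1}\lambda^{n-1}+c_{n-2}\lambda^{n-2}+\dots+c_0.$$ Then $$c_k=(-1)^{q+r}\sum_{F\in\mathcal F^{r,q}_{n-k-1}(\widetilde G^*_q)}\pi_F\qquad\text{for }k=0,1,\dots,n-1.$$
   Context: A linear compartmental model $\mathcal M=(G,In,Out,Leak)$ consists of a finite directed graph $G=(V_G,E_G)$ without multi-edges, compartments $V_G=\{1,\dots,n\}$, and subsets $In,Out,Leak\subseteq V_G$; edge $j\to i$ carries label (parameter) $a_{ij}$ and each $i\in Leak$ carries $a_{0i}$. The compartmental matrix $A$ has $A_{ii}=-\sum_{k:\,i\to k\in E_G}a_{ki}$ (minus $a_{0i}$ if $i\in Leak$), $A_{ij}=a_{ij}$ if $j\to i\in E_G$, $0$ otherwise. $B^{r,q}$ denotes $B$ with row $r$ and column $q$ removed. The leak-augmented graph $\widetilde G$ is obtained from $G$ by adding a node $0$ and, for each $j\in Leak$, an edge $j\to0$ labeled $a_{0j}$; $\widetilde G^*_q$ is obtained from $\widetilde G$ by removing all edges outgoing from $q$. A spanning incoming forest of a graph is a spanning subgraph whose underlying undirected graph has no cycles and in which each node has at most one outgoing edge. $\mathcal F_j^{k,\ell}(H)$ is the set of spanning incoming forests of $H$ with exactly $j$ edges in which some connected component contains both $k$ and $\ell$. $\pi_F$ is the product of the edge labels of $F$ ($1$ if there are no edges). 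*)

theory Defs
  imports "Jordan_Normal_Form.Char_Poly"
begin

text \<open>Compartments are 1..n, node 0 is the leak node of the leak-augmented graph.
  A directed edge j -> i is the pair (j, i); its label is the parameter a i j
  (so a leak edge j -> 0 carries a 0 j).  Parameters take values in an arbitrary
  commutative ring, which subsumes treating them as indeterminates.\<close>

definition comp_entry ::
  "nat set \<Rightarrow> (nat \<times> nat) set \<Rightarrow> nat set \<Rightarrow> (nat \<Rightarrow> nat \<Rightarrow> 'a::comm_ring_1) \<Rightarrow> nat \<Rightarrow> nat \<Rightarrow> 'a" where
  "comp_entry V E Leak a i j =
     (if i = j then - (\<Sum>k\<in>{k. (i, k) \<in> E}. a k i) - (if i \<in> Leak then a 0 i else 0)
      else if (j, i) \<in> E then a i j else 0)"

text \<open>The n x n compartmental matrix; matrix index i (0-based) is compartment i+1.\<close>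
definition comp_matrix ::
  "nat \<Rightarrow> (nat \<times> nat) set \<Rightarrow> nat set \<Rightarrow> (nat \<Rightarrow> nat \<Rightarrow> 'a::comm_ring_1) \<Rightarrow> 'a mat" where
  "comp_matrix n E Leak a = mat n n (\<lambda>(i, j). comp_entry {1..n} E Leak a (i + 1) (j + 1))"

definition is_lcm :: "nat \<Rightarrow> (nat \<times> nat) set \<Rightarrow> nat set \<Rightarrow> nat set \<Rightarrow> nat set \<Rightarrow> bool" where
  "is_lcm n E In Out Leak \<longleftrightarrow>
     E \<subseteq> {1..n} \<times> {1..n} \<and> (\<forall>(j, i)\<in>E. j \<noteq> i) \<and>
     In \<subseteq> {1..n} \<and> Out \<subseteq> {1..n} \<and> Leak \<subseteq> {1..n}"

definition leak_aug_edges :: "(nat \<times> nat) set \<Rightarrow> nat set \<Rightarrow> (nat \<times> nat) set" where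
  "leak_aug_edges E Leak = E \<union> {(j, 0) | j. j \<in> Leak}"

definition remove_out :: "(nat \<times> nat) set \<Rightarrow> nat \<Rightarrow> (nat \<times> nat) set" where
  "remove_out E q = {(u, v) \<in> E. u \<noteq> q}"

definition has_undirected_cycle :: "('v \<times> 'v) set \<Rightarrow> bool" where
  "has_undirected_cycle F \<longleftrightarrow>
     (\<exists>vs es. length vs = length es \<and> es \<noteq> [] \<and> distinct vs \<and> distinct es \<and>
        (\<forall>i < length es. es ! i \<in> F \<and>
           (es ! i = (vs ! i, vs ! ((i + 1) mod length es)) \<or>
            es ! i = (vs ! ((i + 1) mod length es), vs ! i))))"

definition spanning_incoming_forest :: "('v \<times> 'v) set \<Rightarrow> ('v \<times> 'v) set \<Rightarrow> bool" where
  "spanning_incoming_forest EH F \<longleftrightarrow>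
     F \<subseteq> EH \<and> \<not> has_undirected_cycle F \<and>
     (\<forall>u v w. (u, v) \<in> F \<longrightarrow> (u, w) \<in> F \<longrightarrow> v = w)"

definition same_component :: "('v \<times> 'v) set \<Rightarrow> 'v \<Rightarrow> 'v \<Rightarrow> bool" where
  "same_component F k l \<longleftrightarrow> (k, l) \<in> (F \<union> F\<inverse>)\<^sup>*"

definition forests_kl :: "nat \<Rightarrow> 'v \<Rightarrow> 'v \<Rightarrow> ('v \<times> 'v) set \<Rightarrow> ('v \<times> 'v) set set" where
  "forests_kl j k l EH =
     {F. spanning_incoming_forest EH F \<and> card F = j \<and> same_component F k l}"

definition edge_label_prod :: "(nat \<Rightarrow> nat \<Rightarrow> 'a::comm_ring_1) \<Rightarrow> (nat \<times> nat) set \<Rightarrow> 'a" where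
  "edge_label_prod a F = (\<Prod>(u, v)\<in>F. a v u)"

end

theory Submission
  imports Defs
begin

(* Replacing column q of \<lambda>I - A by the unit vector e_r gives a matrix whose determinant is the
  (r, q)-minor up to the sign (-1)^(q+r).  Every other column j of \<lambda>I - A is \<lambda> e_j plus
  a_tj (e_j - e_t) summed over the edges j \<rightarrow> t of the leak-augmented graph (with e_0 = 0).
  Expanding the determinant multilinearly, the terms are indexed by single-valued edge sets F
  avoiding q, weighted by \<pi>_F \<lambda>^(n-1-|F|).  The determinant of a term is that of I minus the
  adjacency matrix of F with column q replaced by e_r, i.e. det (I - Adj F) - det (I - Adj (F + q \<rightarrow> r)).
  For a functional graph det (I - Adj) is 1 if it is acyclic (order the vertices by reachability)
  and 0 otherwise (the rows of the vertices reaching a cycle sum to zero); so a term survives,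
  with value 1, exactly when F is acyclic and r reaches q.  Those F are the incoming forests of
  the graph without the out-edges of q in which r and q lie in one component. *)

section \<open>Determinant identities\<close>

lemma det_eq_prod_diag_if_potential:
  fixes A :: "'a::comm_ring_1 mat" and h :: "nat \<Rightarrow> nat"
  assumes A: "A \<in> carrier_mat n n"
    and h: "\<And>i j. i < n \<Longrightarrow> j < n \<Longrightarrow> i \<noteq> j \<Longrightarrow> A $$ (i, j) \<noteq> 0 \<Longrightarrow> h i < h j"
  shows "det A = (\<Prod>j<n. A $$ (j, j))"
proof -
  have off_id: "(\<Prod>j<n. A $$ (p j, j)) = 0" if p: "p permutes {0..<n}" "p \<noteq> id" for p
  proof (rule ccontr)
    assume "(\<Prod>j<n. A $$ (p j, j)) \<noteq> 0"
    then have nz: "A $$ (p j, j) \<noteq> 0" if "j < n" for j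
      using that prod_zero[of "{..<n}" "\<lambda>j. A $$ (p j, j)"] by blast
    have p_lt: "p j < n" if "j < n" for j
      using that permutes_in_image[OF p(1)] by simp
    have le: "h (p j) \<le> h j" if "j \<in> {..<n}" for j
      using h[of "p j" j] nz p_lt that by (cases "p j = j") auto
    obtain j where j: "p j \<noteq> j" using p(2) by (metis eq_id_iff)
    then have "j \<in> {..<n}" using permutes_not_in[OF p(1)] by fastforce
    then have "(\<Sum>j<n. h (p j)) < (\<Sum>j<n. h j)"
      using h[of "p j" j] nz p_lt j le by (intro sum_strict_mono_ex1) auto
    moreover have "(\<Sum>j<n. h (p j)) = (\<Sum>j<n. h j)"
      using sum.permute[OF p(1), of h] by (simp add: atLeast0LessThan comp_def)
    ultimately show False by simp
  qed
  have "det A = (\<Sum>p | p permutes {0..<n}. signof p * (\<Prod>j<n. A $$ (p j, j)))"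
    by (rule det_col[OF A])
  also have "\<dots> = signof (id :: nat \<Rightarrow> nat) * (\<Prod>j<n. A $$ (id j, j))"
    using off_id by (subst sum.remove[of _ id]) (auto simp: permutes_id finite_permutations)
  finally show ?thesis by (simp add: sign_id)
qed

lemma det_mat_sum_cols:
  fixes w :: "nat \<Rightarrow> 'b \<Rightarrow> 'a::comm_ring_1" and v :: "nat \<Rightarrow> 'b \<Rightarrow> nat \<Rightarrow> 'a"
  assumes "\<And>j. j < n \<Longrightarrow> finite (T j)"
  shows "det (mat n n (\<lambda>(i, j). \<Sum>t\<in>T j. w j t * v j t i)) =
    (\<Sum>f\<in>Pi\<^sub>E {..<n} T. (\<Prod>j<n. w j (f j)) * det (mat n n (\<lambda>(i, j). v j (f j) i)))"
proof -
  let ?P = "{p. p permutes {0..<n}}"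
  have p_lt: "p j < n" if "p \<in> ?P" "j < n" for p j
    using that permutes_in_image by fastforce
  have "det (mat n n (\<lambda>(i, j). \<Sum>t\<in>T j. w j t * v j t i)) =
      (\<Sum>p\<in>?P. signof p * (\<Prod>j<n. \<Sum>t\<in>T j. w j t * v j t (p j)))"
    using p_lt by (auto simp: det_col[OF mat_carrier] intro!: sum.cong prod.cong)
  also have "\<dots> = (\<Sum>p\<in>?P. \<Sum>f\<in>Pi\<^sub>E {..<n} T.
      (\<Prod>j<n. w j (f j)) * (signof p * (\<Prod>j<n. v j (f j) (p j))))"
  proof (rule sum.cong[OF refl])
    fix p
    have "(\<Prod>j<n. \<Sum>t\<in>T j. w j t * v j t (p j)) =
        (\<Sum>f\<in>Pi\<^sub>E {..<n} T. \<Prod>j<n. w j (f j) * v j (f j) (p j))"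
      using assms by (intro prod_sum_PiE) auto
    then show "signof p * (\<Prod>j<n. \<Sum>t\<in>T j. w j t * v j t (p j)) = (\<Sum>f\<in>Pi\<^sub>E {..<n} T.
        (\<Prod>j<n. w j (f j)) * (signof p * (\<Prod>j<n. v j (f j) (p j))))"
      by (simp add: prod.distrib sum_distrib_left mult.left_commute)
  qed
  also have "\<dots> =
      (\<Sum>f\<in>Pi\<^sub>E {..<n} T. (\<Prod>j<n. w j (f j)) * det (mat n n (\<lambda>(i, j). v j (f j) i)))"
    using p_lt by (subst sum.swap) (auto simp: det_col[OF mat_carrier] sum_distrib_left intro!: sum.cong prod.cong)
  finally show ?thesis .
qed

lemma mat_delete_cong_col:
  assumes "A \<in> carrier_mat n n" "B \<in> carrier_mat n n"
    and "\<And>i j. i < n \<Longrightarrow> j < n \<Longrightarrow> j \<noteq> c \<Longrightarrow> A $$ (i, j) = B $$ (i, j)"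
  shows "mat_delete A i c = mat_delete B i c"
  using assms by (intro eq_matI) (auto simp: mat_delete_def)

lemma det_col_diff:
  fixes A B C :: "'a::comm_ring_1 mat"
  assumes A: "A \<in> carrier_mat n n" and B: "B \<in> carrier_mat n n" and C: "C \<in> carrier_mat n n"
    and c: "c < n"
    and off_c: "\<And>i j. i < n \<Longrightarrow> j < n \<Longrightarrow> j \<noteq> c \<Longrightarrow>
      B $$ (i, j) = A $$ (i, j) \<and> C $$ (i, j) = A $$ (i, j)"
    and at_c: "\<And>i. i < n \<Longrightarrow> A $$ (i, c) = B $$ (i, c) - C $$ (i, c)"
  shows "det A = det B - det C"
proof -
  have "cofactor B i c = cofactor A i c" "cofactor C i c = cofactor A i c" for i
    unfolding cofactor_def using mat_delete_cong_col[OF B A] mat_delete_cong_col[OF C A] off_c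
    by metis+
  then show ?thesis
    using laplace_expansion_column[OF A c] laplace_expansion_column[OF B c]
      laplace_expansion_column[OF C c]
    by (simp add: at_c left_diff_distrib sum_subtractf)
qed

definition mat_col_unit :: "'a::zero_neq_one mat \<Rightarrow> nat \<Rightarrow> nat \<Rightarrow> 'a mat" where
  "mat_col_unit A i c =
     mat (dim_row A) (dim_col A) (\<lambda>(i', j). if j = c then of_bool (i' = i) else A $$ (i', j))"

lemma mat_col_unit_carrier [simp]: "A \<in> carrier_mat n m \<Longrightarrow> mat_col_unit A i c \<in> carrier_mat n m"
  by (simp add: mat_col_unit_def)

lemma dim_mat_col_unit [simp]:
  "dim_row (mat_col_unit A i c) = dim_row A" "dim_col (mat_col_unit A i c) = dim_col A"
  by (simp_all add: mat_col_unit_def)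

lemma index_mat_col_unit [simp]:
  "i' < dim_row A \<Longrightarrow> j < dim_col A \<Longrightarrow>
    mat_col_unit A i c $$ (i', j) = (if j = c then of_bool (i' = i) else A $$ (i', j))"
  by (simp add: mat_col_unit_def)

lemma det_mat_col_unit:
  fixes A :: "'a::comm_ring_1 mat"
  assumes A: "A \<in> carrier_mat n n" and "i < n" "c < n"
  shows "det (mat_col_unit A i c) = cofactor A i c"
proof -
  have B: "mat_col_unit A i c \<in> carrier_mat n n" using A by simp
  have "mat_delete (mat_col_unit A i c) i c = mat_delete A i c"
    using A by (intro mat_delete_cong_col[OF B A]) (simp add: mat_col_unit_def)
  then show ?thesis
    using laplace_expansion_column[OF B \<open>c < n\<close>] assms
    by (simp add: mat_col_unit_def cofactor_def if_distrib cong: if_cong)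
qed

section \<open>Undirected cycles and forests of single-valued relations\<close>

lemma card_trancl_Image_less:
  assumes "finite F" "(u, v) \<in> F" "acyclic F"
  shows "card (F\<^sup>+ `` {v}) < card (F\<^sup>+ `` {u})"
proof (rule psubset_card_mono)
  show "finite (F\<^sup>+ `` {u})" using assms(1) by (simp add: finite_Image)
  have "F\<^sup>+ `` {v} \<subseteq> F\<^sup>+ `` {u}" using assms(2) by (auto intro: trancl_into_trancl2)
  moreover have "v \<in> F\<^sup>+ `` {u} - F\<^sup>+ `` {v}" using assms(2,3) by (auto simp: acyclic_def)
  ultimately show "F\<^sup>+ `` {v} \<subset> F\<^sup>+ `` {u}" by blast
qed

lemma has_undirected_cycle_if_not_acyclic:
  assumes "\<not> acyclic F"
  shows "has_undirected_cycle F"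
proof -
  obtain x where "(x, x) \<in> F\<^sup>+" using assms unfolding acyclic_def by blast
  then have ex: "\<exists>m. 0 < m \<and> (x, x) \<in> F ^^ m" by (simp add: trancl_power)
  define m where "m = (LEAST m. 0 < m \<and> (x, x) \<in> F ^^ m)"
  have m: "0 < m" "(x, x) \<in> F ^^ m" using LeastI_ex[OF ex] unfolding m_def by auto
  have minimal: "m \<le> k" if "0 < k" "(x, x) \<in> F ^^ k" for k
    using that unfolding m_def by (simp add: Least_le)
  obtain p where p: "p 0 = x" "p m = x" "\<And>i. i < m \<Longrightarrow> (p i, p (Suc i)) \<in> F"
    using m(2) unfolding relpow_fun_conv by blast
  have path: "(p i, p (i + d)) \<in> F ^^ d" if "i + d \<le> m" for i d
    using that p(3) by (auto simp: relpow_fun_conv intro!: exI[of _ "\<lambda>k. p (i + k)"])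
  \<comment> \<open>A shortest closed walk through x does not revisit a vertex.\<close>
  have "p a \<noteq> p b" if "a < b" "b < m" for a b
  proof
    assume "p a = p b"
    then have "(x, x) \<in> F ^^ a O F ^^ (m - b)"
      using path[of 0 a] path[of b "m - b"] p(1,2) that by auto
    then have "(x, x) \<in> F ^^ (a + (m - b))" by (simp add: relpow_add)
    then show False using minimal[of "a + (m - b)"] that by linarith
  qed
  then have inj: "inj_on p {..<m}" by (metis inj_onI lessThan_iff linorder_neqE_nat)
  define vs where "vs = map p [0..<m]"
  define es where "es = map (\<lambda>i. (p i, p (Suc i))) [0..<m]"
  have next_vertex: "vs ! ((i + 1) mod m) = p (Suc i)" if "i < m" for i
    using that p(1,2) m(1) by (cases "Suc i = m") (auto simp: vs_def)
  have "distinct vs" using inj by (simp add: vs_def distinct_map atLeast0LessThan)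
  moreover have "distinct es"
    using inj by (simp add: es_def distinct_map atLeast0LessThan inj_on_def)
  moreover have "length vs = length es" "es \<noteq> []" "length es = m" using m(1) by (auto simp: vs_def es_def)
  moreover have "es ! i \<in> F \<and> es ! i = (vs ! i, vs ! ((i + 1) mod length es))" if "i < length es" for i
    using that p(3) next_vertex by (auto simp: es_def vs_def)
  ultimately show ?thesis unfolding has_undirected_cycle_def by metis
qed

lemma not_has_undirected_cycle_if_acyclic:
  assumes fin: "finite F" and sv: "single_valued F" and acyc: "acyclic F"
  shows "\<not> has_undirected_cycle F"
proof
  assume "has_undirected_cycle F"
  then obtain vs es where len: "length vs = length es" and ne: "es \<noteq> []"
    and dist: "distinct es"
    and cyc: "\<And>i. i < length es \<Longrightarrow> es ! i \<in> F \<and>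
           (es ! i = (vs ! i, vs ! ((i + 1) mod length es)) \<or>
            es ! i = (vs ! ((i + 1) mod length es), vs ! i))"
    unfolding has_undirected_cycle_def by blast
  define m where "m = length es"
  have m: "0 < m" using ne by (simp add: m_def)
  define h where "h x = card (F\<^sup>+ `` {x})" for x
  have h_less: "h v < h u" if "(u, v) \<in> F" for u v
    using card_trancl_Image_less[OF fin that acyc] by (simp add: h_def)
  \<comment> \<open>At a vertex of maximal potential both incident cycle edges leave it, so by
    single-valuedness they coincide.\<close>
  obtain t where t: "t < m" and t_max: "\<And>i. i < m \<Longrightarrow> h (vs ! i) \<le> h (vs ! t)"
  proof -
    let ?H = "(\<lambda>i. h (vs ! i)) ` {..<m}"
    have "Max ?H \<in> ?H" using m by (intro Max_in) auto
    then obtain t where "t < m" "h (vs ! t) = Max ?H" by auto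
    then show ?thesis using that[of t] by (auto intro: Max_ge)
  qed
  define t' where "t' = (t + m - 1) mod m"
  have t': "t' < m" "(t' + 1) mod m = t"
    using m t by (auto simp: t'_def mod_Suc_eq Suc_diff_le)
  have "(vs ! ((t + 1) mod m), vs ! t) \<notin> F" "(vs ! t', vs ! t) \<notin> F"
    using t_max[of "(t + 1) mod m"] t_max[OF t'(1)] m by (auto dest!: h_less)
  then have out_t: "es ! t = (vs ! t, vs ! ((t + 1) mod m))" and out_t': "es ! t' = (vs ! t, vs ! t')"
    using cyc[of t] cyc[of t'] t t' by (auto simp: m_def)
  moreover have "es ! t \<in> F" "es ! t' \<in> F" using cyc t t'(1) by (auto simp: m_def)
  ultimately have "es ! t = es ! t'" using single_valuedD[OF sv] by auto
  then have "t = t'" using dist t t'(1) by (simp add: m_def nth_eq_iff_index_eq)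
  then show False using out_t' \<open>es ! t' \<in> F\<close> h_less by fastforce
qed

lemma spanning_incoming_forest_iff:
  assumes "finite F"
  shows "spanning_incoming_forest EH F \<longleftrightarrow> F \<subseteq> EH \<and> single_valued F \<and> acyclic F"
  using assms has_undirected_cycle_if_not_acyclic not_has_undirected_cycle_if_acyclic
  unfolding spanning_incoming_forest_def single_valued_def by blast

lemma same_component_iff_rtrancl:
  assumes sv: "single_valued F" and sink: "q \<notin> Domain F"
  shows "same_component F r q \<longleftrightarrow> (r, q) \<in> F\<^sup>*"
proof
  assume "same_component F r q"
  then have "(r, q) \<in> (F \<union> F\<inverse>)\<^sup>*" by (simp add: same_component_def)
  then show "(r, q) \<in> F\<^sup>*"
  proof (induction rule: converse_rtrancl_induct)
    case (step y z)
    show ?case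
    proof (cases "(y, z) \<in> F")
      case False
      then have "(z, y) \<in> F" using step.hyps(1) by blast
      \<comment> \<open>z is not the sink q, so its path to q starts with its unique edge z \<rightarrow> y.\<close>
      with step.IH sink obtain w where "(z, w) \<in> F" "(w, q) \<in> F\<^sup>*"
        by (metis DomainI converse_rtranclE)
      with \<open>(z, y) \<in> F\<close> sv show ?thesis by (metis single_valuedD)
    qed (use step.IH in auto)
  qed simp
next
  assume "(r, q) \<in> F\<^sup>*"
  then show "same_component F r q"
    unfolding same_component_def by (rule rtrancl_mono[THEN subsetD, rotated]) blast
qed

section \<open>The matrix I - Adj of a functional graph\<close>

(* Row and column i stand for vertex i + 1; the leak node 0 has no row, so an edge j + 1 \<rightarrow> 0
  leaves column j equal to the unit vector e_j. *)
definition id_minus_adj :: "nat \<Rightarrow> (nat \<times> nat) set \<Rightarrow> int mat" where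
  "id_minus_adj n F = mat n n (\<lambda>(i, j). of_bool (i = j) - of_bool ((j + 1, i + 1) \<in> F))"

lemma id_minus_adj_carrier [simp]: "id_minus_adj n F \<in> carrier_mat n n"
  by (simp add: id_minus_adj_def)

lemma det_id_minus_adj_acyclic:
  assumes "finite F" "acyclic F"
  shows "det (id_minus_adj n F) = 1"
proof -
  have "det (id_minus_adj n F) = (\<Prod>j<n. id_minus_adj n F $$ (j, j))"
    by (rule det_eq_prod_diag_if_potential[where h = "\<lambda>i. card (F\<^sup>+ `` {i + 1})"])
      (use card_trancl_Image_less[OF assms(1) _ assms(2)] in \<open>auto simp: id_minus_adj_def\<close>)
  also have "\<dots> = 1"
  proof (intro prod.neutral ballI)
    fix j assume "j \<in> {..<n}"
    moreover have "(j + 1, j + 1) \<notin> F" using assms(2) unfolding acyclic_def by (meson r_into_trancl')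
    ultimately show "id_minus_adj n F $$ (j, j) = 1" by (simp add: id_minus_adj_def)
  qed
  finally show ?thesis .
qed

lemma det_id_minus_adj_cyclic:
  assumes sv: "single_valued F" and dom: "Domain F \<subseteq> {1..n}" and cyc: "\<not> acyclic F"
  shows "det (id_minus_adj n F) = 0"
proof -
  obtain x where x: "(x, x) \<in> F\<^sup>+" using cyc by (auto simp: acyclic_def)
  \<comment> \<open>The rows indexed by the vertices from which x is reachable sum to zero.\<close>
  define R where "R = {y. (y, x) \<in> F\<^sup>*}"
  have step_R: "y \<in> R \<longleftrightarrow> (\<exists>t\<in>R. (y, t) \<in> F)" for y
  proof
    assume "y \<in> R"
    show "\<exists>t\<in>R. (y, t) \<in> F"
    proof (cases "y = x")
      case True
      then show ?thesis using x by (auto simp: R_def dest: tranclD)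
    next
      case False
      then show ?thesis using \<open>y \<in> R\<close> by (auto simp: R_def elim: converse_rtranclE)
    qed
  qed (auto simp: R_def intro: converse_rtrancl_into_rtrancl)
  have R_sub: "R \<subseteq> {1..n}" using step_R dom by blast
  have pred_count:
    "(\<Sum>i<n. of_bool ((j + 1, i + 1) \<in> F \<and> i + 1 \<in> R)) = (of_bool (j + 1 \<in> R) :: int)" for j
  proof (cases "j + 1 \<in> R")
    case True
    then obtain t where t: "t \<in> R" "(j + 1, t) \<in> F" using step_R by blast
    have "t \<in> {1..n}" using t R_sub by blast
    have "(j + 1, i + 1) \<in> F \<and> i + 1 \<in> R \<longleftrightarrow> i + 1 = t" for i
      using single_valuedD[OF sv t(2)] t by blast
    then have "(\<Sum>i<n. of_bool ((j + 1, i + 1) \<in> F \<and> i + 1 \<in> R)) =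
        (\<Sum>i<n. of_bool (i + 1 = t) :: int)"
      by (simp only:)
    also have "\<dots> = (\<Sum>i<n. of_bool (i = t - 1))"
      using \<open>t \<in> {1..n}\<close> by (intro sum.cong) auto
    also have "\<dots> = 1"
    proof -
      have "t - 1 < n" using \<open>t \<in> {1..n}\<close> by auto
      then show ?thesis by (simp add: Int_insert_right)
    qed
    finally show ?thesis using True by simp
  next
    case False
    then have "\<not> ((j + 1, i + 1) \<in> F \<and> i + 1 \<in> R)" for i using step_R by blast
    with False show ?thesis by auto
  qed
  define v where "v = vec n (\<lambda>i. of_bool (i + 1 \<in> R) :: int)"
  have "x \<in> R" "x \<in> {1..n}" using R_sub by (auto simp: R_def)
  then have "x - 1 < n" "v $ (x - 1) \<noteq> 0" by (auto simp: v_def)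
  then have "v \<noteq> 0\<^sub>v n" by auto
  moreover have "transpose_mat (id_minus_adj n F) *\<^sub>v v = 0\<^sub>v n"
  proof (rule eq_vecI)
    fix j assume "j < dim_vec (0\<^sub>v n)"
    then have "(transpose_mat (id_minus_adj n F) *\<^sub>v v) $ j =
        (\<Sum>i<n. (of_bool (i = j) - of_bool ((j + 1, i + 1) \<in> F)) * of_bool (i + 1 \<in> R))"
      by (simp add: id_minus_adj_def v_def scalar_prod_def atLeast0LessThan)
    also have "\<dots> = of_bool (j + 1 \<in> R) - (\<Sum>i<n. of_bool ((j + 1, i + 1) \<in> F \<and> i + 1 \<in> R))"
      using \<open>j < dim_vec (0\<^sub>v n)\<close>
      by (simp add: left_diff_distrib sum_subtractf Int_assoc Collect_conj_eq)
    also have "\<dots> = 0" unfolding pred_count by simp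
    finally show "(transpose_mat (id_minus_adj n F) *\<^sub>v v) $ j = 0\<^sub>v n $ j"
      using \<open>j < dim_vec (0\<^sub>v n)\<close> by simp
  qed (simp add: id_minus_adj_def)
  ultimately have "det (transpose_mat (id_minus_adj n F)) = 0"
    by (subst det_0_iff_vec_prod_zero[of _ n]) (auto simp: v_def intro!: exI[of _ v])
  then show ?thesis by (simp add: det_transpose[of _ n])
qed

lemma det_id_minus_adj:
  assumes "F \<subseteq> {1..n} \<times> {0..n}" "single_valued F"
  shows "det (id_minus_adj n F) = of_bool (acyclic F)"
proof -
  have "finite F" "Domain F \<subseteq> {1..n}" using assms(1) finite_subset by auto
  then show ?thesis using det_id_minus_adj_acyclic det_id_minus_adj_cyclic assms(2) by auto
qed

lemma det_mat_col_unit_id_minus_adj: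
  assumes F: "F \<subseteq> {1..n} \<times> {0..n}" and sv: "single_valued F" and sink: "q \<notin> Domain F"
    and q: "q \<in> {1..n}" and r: "r \<in> {1..n}"
  shows "det (mat_col_unit (id_minus_adj n F) (r - 1) (q - 1)) = of_bool (acyclic F \<and> (r, q) \<in> F\<^sup>*)"
proof -
  \<comment> \<open>Adding the edge q \<rightarrow> r changes only column q - 1, by subtracting the unit vector
    e (r - 1).\<close>
  let ?F' = "insert (q, r) F"
  have F': "?F' \<subseteq> {1..n} \<times> {0..n}" "single_valued ?F'"
    using F sv sink q r by (auto simp: single_valued_def)
  have "det (mat_col_unit (id_minus_adj n F) (r - 1) (q - 1)) =
      det (id_minus_adj n F) - det (id_minus_adj n ?F')"
    by (rule det_col_diff[where c = "q - 1"])
      (use sink q r in \<open>auto simp: mat_col_unit_def id_minus_adj_def\<close>)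
  also have "\<dots> = of_bool (acyclic F) - of_bool (acyclic F \<and> (r, q) \<notin> F\<^sup>*)"
    using det_id_minus_adj[OF F sv] det_id_minus_adj[OF F'] by (simp add: acyclic_insert)
  finally show ?thesis by simp
qed

section \<open>Expanding the columns of the characteristic matrix\<close>

lemma prod_monom: "(\<Prod>j\<in>A. monom (c j) (d j)) = monom (\<Prod>j\<in>A. c j) (\<Sum>j\<in>A. d j)"
  by (induction A rule: infinite_finite_induct) (auto simp: mult_monom)

lemma comp_entry_eq_sum_out_edges:
  assumes lcm: "is_lcm n E In Out Leak" and "i \<in> {1..n}" "j \<in> {1..n}"
  shows "comp_entry V E Leak a i j =
    (\<Sum>t\<in>leak_aug_edges E Leak `` {j}. a t j * (of_bool (t = i) - of_bool (i = j)))"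
proof -
  define OE where "OE = E `` {j}"
  have E: "E \<subseteq> {1..n} \<times> {1..n}" "(j, j) \<notin> E" using lcm by (auto simp: is_lcm_def)
  then have "OE \<subseteq> {1..n}" "j \<notin> OE" by (auto simp: OE_def)
  then have OE: "finite OE" "0 \<notin> OE" "j \<notin> OE" by (auto intro: finite_subset)
  have out: "leak_aug_edges E Leak `` {j} = (if j \<in> Leak then insert 0 OE else OE)"
    by (auto simp: leak_aug_edges_def OE_def)
  show ?thesis
  proof (cases "i = j")
    case True
    have "(\<Sum>t\<in>leak_aug_edges E Leak `` {j}. a t j * (of_bool (t = i) - of_bool (i = j))) =
        - (\<Sum>t\<in>leak_aug_edges E Leak `` {j}. a t j)"
      using True OE \<open>j \<in> {1..n}\<close> by (auto simp: out sum_negf[symmetric] intro!: sum.cong)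
    also have "\<dots> = - (\<Sum>t\<in>OE. a t j) - (if j \<in> Leak then a 0 j else 0)"
      unfolding out using OE by simp
    also have "\<dots> = comp_entry V E Leak a i j"
      using True by (simp add: comp_entry_def OE_def Image_singleton)
    finally show ?thesis ..
  next
    case False
    have "(\<Sum>t\<in>leak_aug_edges E Leak `` {j}. a t j * (of_bool (t = i) - of_bool (i = j))) =
        (\<Sum>t\<in>leak_aug_edges E Leak `` {j}. if t = i then a i j else 0)"
      using False by (intro sum.cong) auto
    also have "\<dots> = of_bool ((j, i) \<in> E) * a i j"
      using OE \<open>i \<in> {1..n}\<close> by (auto simp: out OE_def)
    finally show ?thesis using False by (simp add: comp_entry_def)
  qed
qed

(* A choice f selects for each vertex j + 1 \<noteq> q at most one of its out-edges in EH
  (f j = Some t for the edge j + 1 \<rightarrow> t); the choice None contributes a factor \<lambda>.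
  The vertex q selects nothing: its column has been replaced by a unit vector. *)
locale edge_choice =
  fixes n q r :: nat and EH :: "(nat \<times> nat) set"
  assumes edges: "EH \<subseteq> {1..n} \<times> {0..n}" and q: "q \<in> {1..n}" and r: "r \<in> {1..n}"
begin

definition choices :: "nat \<Rightarrow> nat option set" where
  "choices j = (if j = q - 1 then {None} else insert None (Some ` (EH `` {j + 1})))"

definition choice_edges :: "(nat \<Rightarrow> nat option) \<Rightarrow> (nat \<times> nat) set" where
  "choice_edges f = {(j + 1, t) | j t. j < n \<and> f j = Some t}"

abbreviation sv_subgraphs :: "(nat \<times> nat) set set" where
  "sv_subgraphs \<equiv> {F. F \<subseteq> remove_out EH q \<and> single_valued F}"

lemma finite_choices: "finite (choices j)"
proof -
  have "EH `` {j + 1} \<subseteq> {0..n}" using edges by auto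
  then show ?thesis unfolding choices_def by (auto intro: finite_subset)
qed

lemma choice_edges_iff: "(u, v) \<in> choice_edges f \<longleftrightarrow> u \<in> {1..n} \<and> f (u - 1) = Some v"
  unfolding choice_edges_def by (cases u) auto

lemma choice_edges_eq_image:
  "choice_edges f = (\<lambda>j. (j + 1, the (f j))) ` {j \<in> {..<n}. f j \<noteq> None}"
  unfolding choice_edges_def by force

lemma bij_betw_choice_edges: "bij_betw choice_edges (Pi\<^sub>E {..<n} choices) sv_subgraphs"
proof (rule bij_betw_imageI)
  show "inj_on choice_edges (Pi\<^sub>E {..<n} choices)"
  proof (rule inj_onI)
    fix f g assume f: "f \<in> Pi\<^sub>E {..<n} choices" and g: "g \<in> Pi\<^sub>E {..<n} choices"
      and eq: "choice_edges f = choice_edges g"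
    have "f j = Some t \<longleftrightarrow> g j = Some t" if "j < n" for j t
      using eq that choice_edges_iff[of "j + 1" t] by auto
    then show "f = g" using f g by (intro PiE_ext[OF f g]) (metis lessThan_iff option.exhaust)
  qed
  show "choice_edges ` Pi\<^sub>E {..<n} choices = sv_subgraphs"
  proof (intro equalityI subsetI)
    fix F assume "F \<in> choice_edges ` Pi\<^sub>E {..<n} choices"
    then obtain f where f: "f \<in> Pi\<^sub>E {..<n} choices" and F: "F = choice_edges f" by blast
    have "f j \<in> choices j" if "j < n" for j using f that by auto
    then have "F \<subseteq> remove_out EH q"
      using q by (fastforce simp: F choice_edges_def choices_def remove_out_def split: if_splits)
    moreover have "single_valued F" by (auto simp: F single_valued_def choice_edges_iff)
    ultimately show "F \<in> sv_subgraphs" by blast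
  next
    fix F assume "F \<in> sv_subgraphs"
    then have F: "F \<subseteq> remove_out EH q" and sv: "single_valued F" by auto
    define f where
      "f = restrict (\<lambda>j. if j + 1 \<in> Domain F then Some (THE t. (j + 1, t) \<in> F) else None) {..<n}"
    have the_target: "(THE t. (u, t) \<in> F) = t" if "(u, t) \<in> F" for u t
      using that single_valuedD[OF sv] by (intro the_equality) auto
    have f_Some: "f j = Some t \<longleftrightarrow> (j + 1, t) \<in> F" if "j < n" for j t
      using that the_target by (auto simp: f_def)
    have "f \<in> Pi\<^sub>E {..<n} choices"
    proof (rule PiE_I)
      fix j assume "j \<in> {..<n}"
      show "f j \<in> choices j"
      proof (cases "f j")
        case (Some t)
        then have "(j + 1, t) \<in> F" using f_Some \<open>j \<in> {..<n}\<close> by simp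
        then have "(j + 1, t) \<in> EH" "j \<noteq> q - 1" using F q by (auto simp: remove_out_def)
        then show ?thesis using Some by (simp add: choices_def)
      qed (simp add: choices_def)
    qed (simp add: f_def)
    moreover have "(u, v) \<in> choice_edges f \<longleftrightarrow> (u, v) \<in> F" for u v
    proof -
      have "u \<in> {1..n}" if "(u, v) \<in> F" using that F edges by (auto simp: remove_out_def)
      then show ?thesis using f_Some[of "u - 1" v] by (auto simp: choice_edges_iff)
    qed
    then have "choice_edges f = F" by auto
    ultimately show "F \<in> choice_edges ` Pi\<^sub>E {..<n} choices" by blast
  qed
qed

lemma card_less_if_sv_subgraph:
  assumes "F \<in> sv_subgraphs"
  shows "card F < n"
proof -
  have "inj_on fst F" using assms by (auto simp: inj_on_def single_valued_def)
  then have "card F = card (fst ` F)" by (simp add: card_image)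
  also have "\<dots> \<le> card ({1..n} - {q})"
    using assms edges by (intro card_mono) (auto simp: remove_out_def)
  also have "\<dots> < n" using q by simp
  finally show ?thesis .
qed

lemma finite_sink_free_if_subset_remove_out:
  assumes "F \<subseteq> remove_out EH q"
  shows "finite F" "q \<notin> Domain F"
proof -
  have "F \<subseteq> {1..n} \<times> {0..n}" using assms edges by (auto simp: remove_out_def)
  then show "finite F" by (rule finite_subset) simp
  show "q \<notin> Domain F" using assms by (auto simp: remove_out_def)
qed

lemma finite_sv_subgraphs: "finite sv_subgraphs"
proof (rule finite_subset)
  show "sv_subgraphs \<subseteq> Pow (remove_out EH q)" by auto
  show "finite (Pow (remove_out EH q))"
    using finite_sink_free_if_subset_remove_out(1)[OF order_refl] by simp
qed

lemma forests_kl_eq: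
  "forests_kl m r q (remove_out EH q) =
    {F \<in> sv_subgraphs. card F = m \<and> acyclic F \<and> (r, q) \<in> F\<^sup>*}"
proof (intro equalityI subsetI)
  fix F assume F: "F \<in> forests_kl m r q (remove_out EH q)"
  then have "F \<subseteq> remove_out EH q" by (simp add: forests_kl_def spanning_incoming_forest_def)
  with F show "F \<in> {F \<in> sv_subgraphs. card F = m \<and> acyclic F \<and> (r, q) \<in> F\<^sup>*}"
    using finite_sink_free_if_subset_remove_out
    by (auto simp: forests_kl_def spanning_incoming_forest_iff same_component_iff_rtrancl)
next
  fix F assume "F \<in> {F \<in> sv_subgraphs. card F = m \<and> acyclic F \<and> (r, q) \<in> F\<^sup>*}"
  then show "F \<in> forests_kl m r q (remove_out EH q)"
    using finite_sink_free_if_subset_remove_out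
    by (auto simp: forests_kl_def spanning_incoming_forest_iff same_component_iff_rtrancl)
qed

definition choice_coeff :: "(nat \<Rightarrow> nat \<Rightarrow> 'a::comm_ring_1) \<Rightarrow> nat \<Rightarrow> nat option \<Rightarrow> 'a" where
  "choice_coeff a j t = (case t of None \<Rightarrow> 1 | Some s \<Rightarrow> a s (j + 1))"

definition choice_degree :: "nat \<Rightarrow> nat option \<Rightarrow> nat" where
  "choice_degree j t = of_bool (t = None \<and> j \<noteq> q - 1)"

lemma prod_choice_coeff: "(\<Prod>j<n. choice_coeff a j (f j)) = edge_label_prod a (choice_edges f)"
proof -
  let ?D = "{j \<in> {..<n}. f j \<noteq> None}"
  have inj: "inj_on (\<lambda>j. (j + 1, the (f j))) ?D" by (auto simp: inj_on_def)
  have "edge_label_prod a (choice_edges f) = (\<Prod>j\<in>?D. a (the (f j)) (j + 1))"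
    unfolding edge_label_prod_def choice_edges_eq_image prod.reindex[OF inj] by simp
  also have "\<dots> = (\<Prod>j<n. choice_coeff a j (f j))"
    by (subst prod.inter_filter) (auto simp: choice_coeff_def split: option.split intro!: prod.cong)
  finally show ?thesis ..
qed

lemma card_choice_edges_add_degree:
  assumes f: "f \<in> Pi\<^sub>E {..<n} choices"
  shows "card (choice_edges f) + (\<Sum>j<n. choice_degree j (f j)) + 1 = n"
proof -
  let ?D = "{j \<in> {..<n}. f j \<noteq> None}"
  let ?N = "{j \<in> {..<n}. f j = None \<and> j \<noteq> q - 1}"
  have inj: "inj_on (\<lambda>j. (j + 1, the (f j))) ?D" by (auto simp: inj_on_def)
  have "q - 1 < n" using q by auto
  then have "f (q - 1) \<in> choices (q - 1)" using f by auto
  then have "f (q - 1) = None" by (simp add: choices_def)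
  have "{..<n} = ?D \<union> insert (q - 1) ?N"
    using \<open>q - 1 < n\<close> \<open>f (q - 1) = None\<close> by auto
  then have "card {..<n} = card (?D \<union> insert (q - 1) ?N)" by (rule arg_cong)
  also have "\<dots> = card ?D + card (insert (q - 1) ?N)"
    using \<open>f (q - 1) = None\<close> by (intro card_Un_disjoint) auto
  also have "card (insert (q - 1) ?N) = card ?N + 1" by simp
  also have "card ?D = card (choice_edges f)"
    unfolding choice_edges_eq_image by (rule card_image[OF inj, symmetric])
  also have "card ?N = (\<Sum>j<n. choice_degree j (f j))"
    by (simp add: choice_degree_def of_bool_def sum.inter_filter[symmetric])
  finally show ?thesis by simp
qed

lemma prod_choice_weight:
  assumes "f \<in> Pi\<^sub>E {..<n} choices"
  shows "(\<Prod>j<n. monom (choice_coeff a j (f j)) (choice_degree j (f j))) =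
    monom (edge_label_prod a (choice_edges f)) (n - 1 - card (choice_edges f))"
proof -
  have "(\<Sum>j<n. choice_degree j (f j)) = n - 1 - card (choice_edges f)"
    using card_choice_edges_add_degree[OF assms] by linarith
  then show ?thesis by (simp add: prod_monom prod_choice_coeff)
qed

definition choice_entry :: "nat \<Rightarrow> nat \<Rightarrow> nat option \<Rightarrow> int" where
  "choice_entry i j t = (if j = q - 1 then of_bool (i = r - 1)
     else of_bool (i = j) - (case t of None \<Rightarrow> 0 | Some s \<Rightarrow> of_bool (s = i + 1)))"

lemma choice_matrix_eq:
  "mat n n (\<lambda>(i, j). choice_entry i j (f j)) = mat_col_unit (id_minus_adj n (choice_edges f)) (r - 1) (q - 1)"
proof (rule eq_matI)
  fix i j assume "i < dim_row (mat_col_unit (id_minus_adj n (choice_edges f)) (r - 1) (q - 1))"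
    "j < dim_col (mat_col_unit (id_minus_adj n (choice_edges f)) (r - 1) (q - 1))"
  then have "i < n" "j < n" by (simp_all add: mat_col_unit_def id_minus_adj_def)
  moreover have "(j + 1, i + 1) \<in> choice_edges f \<longleftrightarrow> f j = Some (i + 1)"
    using \<open>j < n\<close> by (simp add: choice_edges_iff)
  ultimately show "mat n n (\<lambda>(i, j). choice_entry i j (f j)) $$ (i, j) =
      mat_col_unit (id_minus_adj n (choice_edges f)) (r - 1) (q - 1) $$ (i, j)"
    by (cases "f j") (simp_all add: choice_entry_def mat_col_unit_def id_minus_adj_def)
qed (simp_all add: mat_col_unit_def id_minus_adj_def)

lemma det_choice_matrix:
  assumes f: "f \<in> Pi\<^sub>E {..<n} choices"
  shows "det (mat n n (\<lambda>(i, j). of_int (choice_entry i j (f j))) :: 'a::comm_ring_1 mat) =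
    of_bool (acyclic (choice_edges f) \<and> (r, q) \<in> (choice_edges f)\<^sup>*)"
proof -
  have "choice_edges f \<in> sv_subgraphs" using f bij_betw_choice_edges by (auto simp: bij_betw_def)
  then have "det (mat n n (\<lambda>(i, j). choice_entry i j (f j))) =
      of_bool (acyclic (choice_edges f) \<and> (r, q) \<in> (choice_edges f)\<^sup>*)"
    unfolding choice_matrix_eq using edges q r
    by (intro det_mat_col_unit_id_minus_adj) (auto simp: remove_out_def)
  moreover have "mat n n (\<lambda>(i, j). of_int (choice_entry i j (f j))) =
      map_mat (of_int :: int \<Rightarrow> 'a) (mat n n (\<lambda>(i, j). choice_entry i j (f j)))"
    by auto
  ultimately show ?thesis by (simp add: of_int_hom.hom_det)
qed

definition choice_expansion_mat :: "(nat \<Rightarrow> nat \<Rightarrow> 'a::comm_ring_1) \<Rightarrow> 'a poly mat" where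
  "choice_expansion_mat a = mat n n (\<lambda>(i, j). \<Sum>t\<in>choices j.
     monom (choice_coeff a j t) (choice_degree j t) * of_int (choice_entry i j t))"

lemma coeff_det_choice_expansion_mat:
  fixes a :: "nat \<Rightarrow> nat \<Rightarrow> 'a::comm_ring_1"
  assumes k: "k < n"
  shows "coeff (det (choice_expansion_mat a)) k =
    (\<Sum>F\<in>forests_kl (n - k - 1) r q (remove_out EH q). edge_label_prod a F)"
proof -
  let ?good = "\<lambda>F. acyclic F \<and> (r, q) \<in> F\<^sup>*"
  let ?term = "\<lambda>F. if ?good F then monom (edge_label_prod a F) (n - 1 - card F) else 0"
  have "det (choice_expansion_mat a) =
    (\<Sum>f\<in>Pi\<^sub>E {..<n} choices. (\<Prod>j<n. monom (choice_coeff a j (f j)) (choice_degree j (f j))) *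
      det (mat n n (\<lambda>(i, j). of_int (choice_entry i j (f j)))))"
    unfolding choice_expansion_mat_def
    by (rule det_mat_sum_cols[where v = "\<lambda>j t i. of_int (choice_entry i j t)"]) (rule finite_choices)
  also have "\<dots> = (\<Sum>f\<in>Pi\<^sub>E {..<n} choices. ?term (choice_edges f))"
    by (intro sum.cong refl) (simp add: prod_choice_weight det_choice_matrix)
  also have "\<dots> = (\<Sum>F\<in>sv_subgraphs. ?term F)"
    by (rule sum.reindex_bij_betw[OF bij_betw_choice_edges])
  finally have "coeff (det (choice_expansion_mat a)) k = (\<Sum>F\<in>sv_subgraphs. coeff (?term F) k)"
    by (simp add: coeff_sum)
  also have "\<dots> =
      (\<Sum>F\<in>sv_subgraphs. if card F = n - k - 1 \<and> ?good F then edge_label_prod a F else 0)"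
  proof (rule sum.cong[OF refl])
    fix F assume "F \<in> sv_subgraphs"
    then have "card F < n" by (rule card_less_if_sv_subgraph)
    then show "coeff (?term F) k = (if card F = n - k - 1 \<and> ?good F then edge_label_prod a F else 0)"
      using k by (auto simp: coeff_monom)
  qed
  also have "\<dots> = (\<Sum>F\<in>forests_kl (n - k - 1) r q (remove_out EH q). edge_label_prod a F)"
    by (simp only: forests_kl_eq sum.inter_filter[OF finite_sv_subgraphs])
  finally show ?thesis .
qed

lemma mat_col_unit_char_poly_eq_choice_expansion_mat:
  assumes lcm: "is_lcm n E In Out Leak" and EH: "EH = leak_aug_edges E Leak"
  shows "mat_col_unit (char_poly_matrix (comp_matrix n E Leak a)) (r - 1) (q - 1) = choice_expansion_mat a"
proof (rule eq_matI)
  fix i j assume "i < dim_row (choice_expansion_mat a)" "j < dim_col (choice_expansion_mat a)"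
  then have ij: "i < n" "j < n" by (simp_all add: choice_expansion_mat_def)
  have L: "char_poly_matrix (comp_matrix n E Leak a) \<in> carrier_mat n n" by (simp add: comp_matrix_def)
  show "mat_col_unit (char_poly_matrix (comp_matrix n E Leak a)) (r - 1) (q - 1) $$ (i, j) =
    choice_expansion_mat a $$ (i, j)"
  proof (cases "j = q - 1")
    case True
    then show ?thesis
      using ij L by (simp add: choice_expansion_mat_def choices_def choice_entry_def choice_coeff_def
          choice_degree_def)
  next
    case False
    let ?out = "EH `` {j + 1}"
    have "finite ?out" using finite_choices[of j] False by (simp add: choices_def finite_image_iff)
    have "mat_col_unit (char_poly_matrix (comp_matrix n E Leak a)) (r - 1) (q - 1) $$ (i, j) =
        (if i = j then [:0, 1:] else 0) + [:- comp_entry {1..n} E Leak a (i + 1) (j + 1):]"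
      using ij L False by (simp add: char_poly_matrix_def comp_matrix_def)
    also have "[:- comp_entry {1..n} E Leak a (i + 1) (j + 1):] =
        (\<Sum>s\<in>?out. [:a s (j + 1) * (of_bool (i = j) - of_bool (s = i + 1)):])"
      using comp_entry_eq_sum_out_edges[OF lcm, of "i + 1" "j + 1" "{1..n}" a] ij
      by (simp add: sum_to_poly EH sum_negf[symmetric] algebra_simps)
    also have "(if i = j then [:0, 1:] else 0) + \<dots> = (\<Sum>t\<in>choices j.
        monom (choice_coeff a j t) (choice_degree j t) * of_int (choice_entry i j t))"
      using False \<open>finite ?out\<close>
      by (simp add: choices_def choice_entry_def choice_coeff_def choice_degree_def sum.reindex
          monom_0 monom_Suc of_int_poly mult.commute)
    finally show ?thesis using ij by (simp add: choice_expansion_mat_def)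
  qed
qed (simp_all add: char_poly_matrix_def comp_matrix_def choice_expansion_mat_def)

end

theorem proposition3p12:
  fixes n :: nat and E :: "(nat \<times> nat) set" and In Out Leak :: "nat set"
    and a :: "nat \<Rightarrow> nat \<Rightarrow> 'a::comm_ring_1" and q r k :: nat
  assumes "is_lcm n E In Out Leak"
    and "q \<in> {1..n}" and "r \<in> {1..n}"
    and "k < n"
  shows "coeff (det (mat_delete (char_poly_matrix (comp_matrix n E Leak a)) (r - 1) (q - 1))) k
       = (-1) ^ (q + r) *
         (\<Sum>F\<in>forests_kl (n - k - 1) r q (remove_out (leak_aug_edges E Leak) q). edge_label_prod a F)"
proof -
  have "leak_aug_edges E Leak \<subseteq> {1..n} \<times> {0..n}"
    using assms(1) by (auto simp: is_lcm_def leak_aug_edges_def)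
  then interpret edge_choice n q r "leak_aug_edges E Leak"
    using assms(2,3) by unfold_locales
  let ?L = "char_poly_matrix (comp_matrix n E Leak a)"
  have "?L \<in> carrier_mat n n" "r - 1 < n" "q - 1 < n" using assms(2,3) by (auto simp: comp_matrix_def)
  then have "det (mat_col_unit ?L (r - 1) (q - 1)) =
      (-1) ^ (r - 1 + (q - 1)) * det (mat_delete ?L (r - 1) (q - 1))"
    by (simp add: det_mat_col_unit cofactor_def)
  moreover have "even (r - 1 + (q - 1)) \<longleftrightarrow> even (q + r)" using assms(2,3) by auto
  ultimately have "det (mat_delete ?L (r - 1) (q - 1)) = (-1) ^ (q + r) * det (mat_col_unit ?L (r - 1) (q - 1))"
    by (simp add: minus_one_power_iff)
  moreover have "coeff (det (mat_col_unit ?L (r - 1) (q - 1))) k =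
      (\<Sum>F\<in>forests_kl (n - k - 1) r q (remove_out (leak_aug_edges E Leak) q). edge_label_prod a F)"
    unfolding mat_col_unit_char_poly_eq_choice_expansion_mat[OF assms(1) refl]
    by (rule coeff_det_choice_expansion_mat[OF assms(4)])
  ultimately show ?thesis by (simp add: minus_one_power_iff)
qed

end
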